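(* Every group of prime order is DRR-detecting (and therefore GRR-detecting).
   Context: For a group $R$ and $S\subseteq R$, the Cayley digraph $\mathrm{Cay}(R,S)$ has vertex set $R$ and an arc from $r$ to $sr$ whenever $s\in S$. It is a DRR if $\mathrm{Aut}(\mathrm{Cay}(R,S))$ equals the right regular representation $\hat R$, and a GRR if additionally $S=S^{-1}$. $\mathrm{Aut}(R)_S$ is the group of automorphisms of $R$ fixing $S$ setwise. $R$ is DRR-detecting if for every $S\subseteq R$, $\mathrm{Aut}(R)_S=1$ implies $\mathrm{Cay}(R,S)$ is a DRR; GRR-detecting if for every $S\subseteq R$ with $S=S^{-1}$, $\mathrm{Aut}(R)_S=1$ implies $\mathrm{Cay}(R,S)$ is a GRR. *)

theory Defs
  imports "HOL-Algebra.Group" "HOL-Computational_Algebra.Primes"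
begin

definition cay_arcs :: "('a, 'b) monoid_scheme \<Rightarrow> 'a set \<Rightarrow> ('a \<times> 'a) set" where
  "cay_arcs G S = {(r, s \<otimes>\<^bsub>G\<^esub> r) | r s. r \<in> carrier G \<and> s \<in> S}"

definition cay_aut :: "('a, 'b) monoid_scheme \<Rightarrow> 'a set \<Rightarrow> ('a \<Rightarrow> 'a) set" where
  "cay_aut G S = {\<sigma>. \<sigma> \<in> extensional (carrier G) \<and>
      bij_betw \<sigma> (carrier G) (carrier G) \<and>
      (\<forall>x\<in>carrier G. \<forall>y\<in>carrier G.
         (x, y) \<in> cay_arcs G S \<longleftrightarrow> (\<sigma> x, \<sigma> y) \<in> cay_arcs G S)}"

definition right_regular :: "('a, 'b) monoid_scheme \<Rightarrow> ('a \<Rightarrow> 'a) set" where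
  "right_regular G = {(\<lambda>x\<in>carrier G. x \<otimes>\<^bsub>G\<^esub> g) | g. g \<in> carrier G}"

definition is_DRR :: "('a, 'b) monoid_scheme \<Rightarrow> 'a set \<Rightarrow> bool" where
  "is_DRR G S \<longleftrightarrow> cay_aut G S = right_regular G"

definition is_GRR :: "('a, 'b) monoid_scheme \<Rightarrow> 'a set \<Rightarrow> bool" where
  "is_GRR G S \<longleftrightarrow> is_DRR G S \<and> (\<lambda>s. inv\<^bsub>G\<^esub> s) ` S = S"

definition aut_stab_trivial :: "('a, 'b) monoid_scheme \<Rightarrow> 'a set \<Rightarrow> bool" where
  "aut_stab_trivial G S \<longleftrightarrow>
     (\<forall>\<phi> \<in> iso G G. \<phi> ` S = S \<longrightarrow> (\<forall>x\<in>carrier G. \<phi> x = x))"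

definition DRR_detecting :: "('a, 'b) monoid_scheme \<Rightarrow> bool" where
  "DRR_detecting G \<longleftrightarrow>
     (\<forall>S. S \<subseteq> carrier G \<longrightarrow> aut_stab_trivial G S \<longrightarrow> is_DRR G S)"

definition GRR_detecting :: "('a, 'b) monoid_scheme \<Rightarrow> bool" where
  "GRR_detecting G \<longleftrightarrow>
     (\<forall>S. S \<subseteq> carrier G \<longrightarrow> (\<lambda>s. inv\<^bsub>G\<^esub> s) ` S = S \<longrightarrow>
        aut_stab_trivial G S \<longrightarrow> is_GRR G S)"

end

theory Submission
  imports Defs "HOL-Algebra.Multiplicative_Group" "HOL-Computational_Algebra.Polynomial"
    "HOL-Number_Theory.Cong"
begin

text \<open>
  For a prime \<open>q\<close> and \<open>X \<subseteq> G\<close>, in the group ring \<open>\<int>[G]\<close> of the abelian group \<open>G\<close> we have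
  \<open>(\<Sum>x\<in>X. x)^q \<equiv> \<Sum>x\<in>X. x^q (mod q)\<close>. Hence the number of walks of length \<open>q\<close> from \<open>a\<close> to
  \<open>b\<close> in \<open>Cay(G, X)\<close> is congruent mod \<open>q\<close> to the number of \<open>x \<in> X\<close> with \<open>x^q = b a^-1\<close>.
  If \<open>q \<noteq> |G|\<close>, then \<open>x \<mapsto> x^q\<close> is injective, that number is 0 or 1, and so it is determined
  by walk counts: every automorphism of \<open>Cay(G, X)\<close> is one of \<open>Cay(G, X^(q))\<close>, where
  \<open>X^(m) = {x^m | x \<in> X}\<close>. By induction, \<open>Aut Cay(G, S) \<le> Aut Cay(G, S^(m))\<close> for every \<open>m\<close>.

  Now let \<open>\<sigma>\<close> fix \<open>1\<close>, and let \<open>y \<noteq> 1\<close> with \<open>\<sigma> y = y^k\<close>. For \<open>1 \<noteq> s \<in> S\<close> write \<open>y = s^j\<close>.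
  Then \<open>y \<in> S^(j)\<close> gives \<open>y^k = \<sigma> y \<in> S^(j)\<close>, say \<open>y^k = t^j\<close> with \<open>t \<in> S\<close>, and since
  \<open>x \<mapsto> x^j\<close> is injective, \<open>s^k = t \<in> S\<close>. So the group automorphism \<open>x \<mapsto> x^k\<close> fixes
  \<open>S\<close>, hence it is the identity, and \<open>\<sigma> y = y\<close>. A Cayley digraph in which only the
  identity automorphism fixes \<open>1\<close> is a DRR.
\<close>

fun walk_count :: "'a set \<Rightarrow> ('a \<times> 'a) set \<Rightarrow> nat \<Rightarrow> 'a \<Rightarrow> 'a \<Rightarrow> nat" where
  "walk_count V E 0 u v = (if u = v then 1 else 0)"
| "walk_count V E (Suc n) u v = (\<Sum>w \<in> {w \<in> V. (w, v) \<in> E}. walk_count V E n u w)"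

lemma walk_count_bij_invariant:
  assumes bij: "bij_betw \<sigma> V V"
    and arcs: "\<And>x y. x \<in> V \<Longrightarrow> y \<in> V \<Longrightarrow> (x, y) \<in> E \<longleftrightarrow> (\<sigma> x, \<sigma> y) \<in> E"
    and u: "u \<in> V" and v: "v \<in> V"
  shows "walk_count V E n (\<sigma> u) (\<sigma> v) = walk_count V E n u v"
  using v
proof (induction n arbitrary: v)
  case 0
  have "\<sigma> u = \<sigma> v \<longleftrightarrow> u = v"
    using bij u 0 by (metis bij_betw_iff_bijections)
  then show ?case by simp
next
  case (Suc n v)
  let ?P = "{w \<in> V. (w, v) \<in> E}"
  have "{w \<in> V. (w, \<sigma> v) \<in> E} = \<sigma> ` ?P"
  proof -
    have "{w \<in> V. (w, \<sigma> v) \<in> E} = {w \<in> \<sigma> ` V. (w, \<sigma> v) \<in> E}"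
      using bij by (simp add: bij_betw_def)
    also have "\<dots> = \<sigma> ` ?P"
      using arcs Suc.prems by auto
    finally show ?thesis .
  qed
  moreover have "inj_on \<sigma> ?P"
    using bij by (auto simp: bij_betw_def intro: inj_on_subset)
  ultimately have "walk_count V E (Suc n) (\<sigma> u) (\<sigma> v) = (\<Sum>w\<in>?P. walk_count V E n (\<sigma> u) (\<sigma> w))"
    by (simp add: sum.reindex)
  also have "\<dots> = walk_count V E (Suc n) u v"
    using Suc.IH by simp
  finally show ?case .
qed

lemma freshmans_dream_dvd:
  fixes x y :: "'a::comm_ring_1"
  assumes "prime q"
  shows "of_nat q dvd (x + y) ^ q - (x ^ q + y ^ q)"
proof -
  have "q > 0"
    using assms prime_gt_0_nat by blast
  have "(x + y) ^ q = (\<Sum>k\<in>{0, q}. of_nat (q choose k) * x ^ k * y ^ (q - k))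
      + (\<Sum>k\<in>{..q} - {0, q}. of_nat (q choose k) * x ^ k * y ^ (q - k))"
    unfolding binomial_ring by (subst sum.subset_diff[of "{0, q}"]) (auto simp: add.commute)
  also have "(\<Sum>k\<in>{0, q}. of_nat (q choose k) * x ^ k * y ^ (q - k)) = x ^ q + y ^ q"
    using \<open>q > 0\<close> by (simp add: add.commute)
  finally have "(x + y) ^ q - (x ^ q + y ^ q) =
      (\<Sum>k\<in>{..q} - {0, q}. of_nat (q choose k) * x ^ k * y ^ (q - k))"
    by simp
  also have "of_nat q dvd \<dots>"
  proof (rule dvd_sum)
    fix k assume "k \<in> {..q} - {0, q}"
    then have "q dvd (q choose k)"
      using assms by (intro dvd_choose_prime) auto
    then obtain c where "q choose k = q * c" ..
    then show "of_nat q dvd of_nat (q choose k) * x ^ k * y ^ (q - k)"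
      by (simp add: mult.assoc)
  qed
  finally show ?thesis .
qed

lemma freshmans_dream_sum_dvd:
  fixes f :: "'b \<Rightarrow> 'a::comm_ring_1"
  assumes "prime q"
  shows "of_nat q dvd (\<Sum>i\<in>I. f i) ^ q - (\<Sum>i\<in>I. f i ^ q)"
proof (induction I rule: infinite_finite_induct)
  case (insert i I)
  have split: "(\<Sum>i\<in>insert i I. f i) ^ q - (\<Sum>i\<in>insert i I. f i ^ q) =
      ((f i + (\<Sum>i\<in>I. f i)) ^ q - (f i ^ q + (\<Sum>i\<in>I. f i) ^ q))
      + ((\<Sum>i\<in>I. f i) ^ q - (\<Sum>i\<in>I. f i ^ q))"
    using insert.hyps by simp
  show ?case
    unfolding split by (rule dvd_add[OF freshmans_dream_dvd[OF assms] insert.IH])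
qed (use assms prime_gt_0_nat in \<open>simp_all add: power_0_left\<close>)

text \<open>Integer polynomials stand in for the group ring \<open>\<int>[G]\<close>, which is not a type:
  \<open>fiber_coeff G g P z\<close> is the coefficient at \<open>z\<close> of the image of \<open>P\<close> under \<open>X \<mapsto> g\<close>.\<close>
definition fiber_coeff :: "('a, 'b) monoid_scheme \<Rightarrow> 'a \<Rightarrow> int poly \<Rightarrow> 'a \<Rightarrow> int" where
  "fiber_coeff G g P z = (\<Sum>k\<le>degree P. if g [^]\<^bsub>G\<^esub> k = z then coeff P k else 0)"

lemma fiber_coeff_eq_sum_atMost:
  assumes "degree P \<le> N"
  shows "fiber_coeff G g P z = (\<Sum>k\<le>N. if g [^]\<^bsub>G\<^esub> k = z then coeff P k else 0)"
  unfolding fiber_coeff_def using assms by (intro sum.mono_neutral_left) (auto simp: coeff_eq_0)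

lemma fiber_coeff_0: "fiber_coeff G g 0 z = 0"
  by (simp add: fiber_coeff_def cong: if_cong)

lemma fiber_coeff_add: "fiber_coeff G g (P + Q) z = fiber_coeff G g P z + fiber_coeff G g Q z"
proof -
  define N where "N = max (degree P) (degree Q)"
  have "degree (P + Q) \<le> N" "degree P \<le> N" "degree Q \<le> N"
    unfolding N_def by (simp_all add: degree_add_le_max)
  then show ?thesis
    by (simp add: fiber_coeff_eq_sum_atMost[of _ N] sum.distrib[symmetric] if_distrib cong: if_cong)
qed

lemma fiber_coeff_sum: "fiber_coeff G g (\<Sum>i\<in>I. P i) z = (\<Sum>i\<in>I. fiber_coeff G g (P i) z)"
  by (induction I rule: infinite_finite_induct) (simp_all add: fiber_coeff_add fiber_coeff_0)

lemma fiber_coeff_smult: "fiber_coeff G g (smult c P) z = c * fiber_coeff G g P z"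
  by (subst fiber_coeff_eq_sum_atMost[OF degree_smult_le])
    (auto simp: fiber_coeff_def sum_distrib_left intro: sum.cong)

lemma fiber_coeff_monom_one: "fiber_coeff G g (monom 1 j) z = (if g [^]\<^bsub>G\<^esub> j = z then 1 else 0)"
proof -
  have "fiber_coeff G g (monom 1 j) z = (\<Sum>k\<in>{j}. if g [^]\<^bsub>G\<^esub> k = z then coeff (monom 1 j) k else 0)"
    by (subst fiber_coeff_eq_sum_atMost[OF degree_monom_le], rule sum.mono_neutral_right)
      (auto simp: coeff_monom)
  then show ?thesis
    by simp
qed

context group
begin

lemma mem_cay_arcs_iff:
  assumes "S \<subseteq> carrier G" "x \<in> carrier G" "y \<in> carrier G"
  shows "(x, y) \<in> cay_arcs G S \<longleftrightarrow> y \<otimes> inv x \<in> S"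
proof
  assume "(x, y) \<in> cay_arcs G S"
  then obtain s where "s \<in> S" "y = s \<otimes> x"
    unfolding cay_arcs_def by blast
  then show "y \<otimes> inv x \<in> S"
    using assms by (auto simp: m_assoc)
next
  assume "y \<otimes> inv x \<in> S"
  moreover have "y = (y \<otimes> inv x) \<otimes> x"
    using assms by (simp add: m_assoc)
  ultimately show "(x, y) \<in> cay_arcs G S"
    unfolding cay_arcs_def using assms by blast
qed

lemma mem_cay_aut_iff:
  assumes "S \<subseteq> carrier G"
  shows "\<sigma> \<in> cay_aut G S \<longleftrightarrow> \<sigma> \<in> extensional (carrier G) \<and> bij_betw \<sigma> (carrier G) (carrier G) \<and>
    (\<forall>a\<in>carrier G. \<forall>b\<in>carrier G. b \<otimes> inv a \<in> S \<longleftrightarrow> \<sigma> b \<otimes> inv (\<sigma> a) \<in> S)"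
  unfolding cay_aut_def using mem_cay_arcs_iff[OF assms] bij_betwE[of \<sigma>] by auto

lemma cay_aut_bij: "\<sigma> \<in> cay_aut G S \<Longrightarrow> bij_betw \<sigma> (carrier G) (carrier G)"
  by (simp add: cay_aut_def)

lemma cay_aut_closed: "\<sigma> \<in> cay_aut G S \<Longrightarrow> x \<in> carrier G \<Longrightarrow> \<sigma> x \<in> carrier G"
  using cay_aut_bij bij_betwE by blast

lemma right_translation_in_cay_aut:
  assumes "S \<subseteq> carrier G" "c \<in> carrier G"
  shows "(\<lambda>x\<in>carrier G. x \<otimes> c) \<in> cay_aut G S"
proof -
  have "bij_betw (\<lambda>x\<in>carrier G. x \<otimes> c) (carrier G) (carrier G)"
    using assms(2) by (intro bij_betwI[where g = "\<lambda>x. x \<otimes> inv c"]) (auto simp: m_assoc)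
  moreover have "(b \<otimes> c) \<otimes> inv (a \<otimes> c) = b \<otimes> inv a" if "a \<in> carrier G" "b \<in> carrier G" for a b
    using that assms(2) by (simp add: inv_mult_group m_assoc[symmetric]) (simp add: m_assoc)
  ultimately show ?thesis
    unfolding mem_cay_aut_iff[OF assms(1)] using assms(2) by simp
qed

lemma cay_aut_compose:
  assumes "\<sigma> \<in> cay_aut G S" "\<tau> \<in> cay_aut G S"
  shows "compose (carrier G) \<tau> \<sigma> \<in> cay_aut G S"
proof -
  have "bij_betw (compose (carrier G) \<tau> \<sigma>) (carrier G) (carrier G)"
    using assms[THEN cay_aut_bij] by (rule bij_betw_compose)
  moreover have "(x, y) \<in> cay_arcs G S \<longleftrightarrow> (\<tau> (\<sigma> x), \<tau> (\<sigma> y)) \<in> cay_arcs G S"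
    if "x \<in> carrier G" "y \<in> carrier G" for x y
  proof -
    have "(x, y) \<in> cay_arcs G S \<longleftrightarrow> (\<sigma> x, \<sigma> y) \<in> cay_arcs G S"
      using assms(1) that unfolding cay_aut_def by blast
    also have "\<dots> \<longleftrightarrow> (\<tau> (\<sigma> x), \<tau> (\<sigma> y)) \<in> cay_arcs G S"
      using assms(2) that cay_aut_closed[OF assms(1)] unfolding cay_aut_def by blast
    finally show ?thesis .
  qed
  ultimately show ?thesis
    unfolding cay_aut_def by (simp add: compose_def)
qed

lemma is_DRR_if_stabiliser_trivial:
  assumes S: "S \<subseteq> carrier G"
    and stab: "\<And>\<sigma> x. \<sigma> \<in> cay_aut G S \<Longrightarrow> \<sigma> \<one> = \<one> \<Longrightarrow> x \<in> carrier G \<Longrightarrow> \<sigma> x = x"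
  shows "is_DRR G S"
  unfolding is_DRR_def
proof
  show "cay_aut G S \<subseteq> right_regular G"
  proof
    fix \<sigma> assume \<sigma>: "\<sigma> \<in> cay_aut G S"
    define c where "c = \<sigma> \<one>"
    have c: "c \<in> carrier G"
      unfolding c_def using cay_aut_closed[OF \<sigma>] by simp
    define \<tau> where "\<tau> = compose (carrier G) (\<lambda>x\<in>carrier G. x \<otimes> inv c) \<sigma>"
    have "\<tau> \<in> cay_aut G S"
      unfolding \<tau>_def using S c by (intro cay_aut_compose[OF \<sigma>] right_translation_in_cay_aut) simp_all
    moreover have "\<tau> \<one> = \<one>"
      using c by (simp add: \<tau>_def compose_def c_def)
    ultimately have "\<sigma> x \<otimes> inv c = x" if "x \<in> carrier G" for x
      using stab[of \<tau> x] that cay_aut_closed[OF \<sigma>] by (simp add: \<tau>_def compose_def)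
    then have "\<sigma> x = x \<otimes> c" if "x \<in> carrier G" for x
      using that c cay_aut_closed[OF \<sigma> that] by (metis inv_solve_right)
    then have "\<sigma> = (\<lambda>x\<in>carrier G. x \<otimes> c)"
      using \<sigma> by (intro extensionalityI[of _ "carrier G"]) (auto simp: cay_aut_def)
    then show "\<sigma> \<in> right_regular G"
      unfolding right_regular_def using c by blast
  qed
  show "right_regular G \<subseteq> cay_aut G S"
    unfolding right_regular_def using right_translation_in_cay_aut[OF S] by blast
qed

lemma cay_aut_preserves_walk_count:
  assumes "\<sigma> \<in> cay_aut G X" "a \<in> carrier G" "b \<in> carrier G"
  shows "walk_count (carrier G) (cay_arcs G X) n (\<sigma> a) (\<sigma> b) =
    walk_count (carrier G) (cay_arcs G X) n a b"
  using assms unfolding cay_aut_def by (intro walk_count_bij_invariant) auto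

lemma walk_count_eq_walk_count_from_one:
  assumes "X \<subseteq> carrier G" "a \<in> carrier G" "b \<in> carrier G"
  shows "walk_count (carrier G) (cay_arcs G X) n a b =
    walk_count (carrier G) (cay_arcs G X) n \<one> (b \<otimes> inv a)"
  using cay_aut_preserves_walk_count[OF right_translation_in_cay_aut[OF assms(1) inv_closed[OF assms(2)]]
      assms(2,3)] assms
  by simp

lemma cay_aut_subset_cay_aut_if_subset_one:
  assumes "X \<subseteq> carrier G" "A \<subseteq> {\<one>}"
  shows "cay_aut G X \<subseteq> cay_aut G A"
proof
  fix \<sigma> assume \<sigma>: "\<sigma> \<in> cay_aut G X"
  have "b \<otimes> inv a \<in> A \<longleftrightarrow> \<sigma> b \<otimes> inv (\<sigma> a) \<in> A" if "a \<in> carrier G" "b \<in> carrier G" for a b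
  proof -
    have "\<sigma> b = \<sigma> a \<longleftrightarrow> b = a"
      using cay_aut_bij[OF \<sigma>] that by (metis bij_betw_iff_bijections)
    moreover have "y \<otimes> inv x = \<one> \<longleftrightarrow> y = x" if "x \<in> carrier G" "y \<in> carrier G" for x y
      using that by (simp add: inv_solve_right')
    ultimately show ?thesis
      using assms(2) that cay_aut_closed[OF \<sigma>] by (auto dest!: subset_singletonD)
  qed
  then show "\<sigma> \<in> cay_aut G A"
    using \<sigma> assms(1) subset_trans[OF assms(2)] unfolding mem_cay_aut_iff[OF assms(1)]
    by (subst mem_cay_aut_iff) simp_all
qed

lemma cay_aut_quotient_iff:
  assumes "S \<subseteq> carrier G" "\<sigma> \<in> cay_aut G S" "a \<in> carrier G" "b \<in> carrier G"
  shows "\<sigma> b \<otimes> inv (\<sigma> a) \<in> S \<longleftrightarrow> b \<otimes> inv a \<in> S"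
  using assms(2-4) unfolding mem_cay_aut_iff[OF assms(1)] by blast

lemma fiber_coeff_pCons_0:
  assumes "g \<in> carrier G" "z \<in> carrier G"
  shows "fiber_coeff G g (pCons 0 P) z = fiber_coeff G g P (z \<otimes> inv g)"
proof -
  have shift: "g [^] k \<otimes> g = z \<longleftrightarrow> g [^] k = z \<otimes> inv g" for k :: nat
    using assms inv_solve_right[of "g [^] k" z g] by auto
  have "fiber_coeff G g (pCons 0 P) z =
      (\<Sum>k\<le>Suc (degree P). if g [^] k = z then coeff (pCons 0 P) k else 0)"
    by (rule fiber_coeff_eq_sum_atMost[OF degree_pCons_le])
  also have "\<dots> = (\<Sum>k\<le>degree P. if g [^] k \<otimes> g = z then coeff P k else 0)"
    by (simp only: sum.atMost_Suc_shift) (simp cong: if_cong)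
  also have "\<dots> = fiber_coeff G g P (z \<otimes> inv g)"
    by (simp only: shift fiber_coeff_def)
  finally show ?thesis .
qed

lemma fiber_coeff_monom_one_mult:
  assumes "g \<in> carrier G" "z \<in> carrier G"
  shows "fiber_coeff G g (monom 1 j * P) z = fiber_coeff G g P (z \<otimes> inv (g [^] j))"
  using assms(2)
proof (induction j arbitrary: z)
  case (Suc j)
  have "fiber_coeff G g (monom 1 (Suc j) * P) z = fiber_coeff G g P (z \<otimes> inv g \<otimes> inv (g [^] j))"
    using assms(1) Suc by (simp add: monom_Suc fiber_coeff_pCons_0)
  also have "z \<otimes> inv g \<otimes> inv (g [^] j) = z \<otimes> inv (g [^] Suc j)"
    using assms(1) Suc.prems by (simp add: m_assoc nat_pow_Suc inv_mult_group)
  finally show ?case .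
qed simp

end

lemma (in comm_group) mult_inv_mult_inv_cancel:
  "z \<in> carrier G \<Longrightarrow> x \<in> carrier G \<Longrightarrow> z \<otimes> inv (z \<otimes> inv x) = x"
  by (simp add: inv_mult m_assoc[symmetric])

locale prime_order_group = group G for G (structure) and p :: nat +
  assumes card_carrier: "card (carrier G) = p"
    and prime_p: "prime p"
begin

lemma finite_carrier: "finite (carrier G)"
  using card_carrier prime_p by (metis card.infinite not_prime_0)

lemma ord_eq_order:
  assumes "y \<in> carrier G" "y \<noteq> \<one>"
  shows "ord y = p"
proof -
  have "ord y dvd p"
    using ord_dvd_group_order[OF assms(1)] card_carrier by (simp add: Coset.order_def)
  moreover have "ord y \<noteq> 1"
    using assms ord_eq_1 by blast
  ultimately show ?thesis
    using prime_p unfolding prime_nat_iff by auto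
qed

lemma pow_eq_one_iff: "y \<in> carrier G \<Longrightarrow> y \<noteq> \<one> \<Longrightarrow> y [^] n = \<one> \<longleftrightarrow> p dvd n"
  by (simp add: pow_eq_id ord_eq_order)

lemma bij_betw_pow:
  assumes "g \<in> carrier G" "g \<noteq> \<one>"
  shows "bij_betw (\<lambda>k. g [^] k) {..<p} (carrier G)"
proof -
  have "p \<ge> 2"
    using prime_p prime_ge_2_nat by blast
  then have "{..<p} = {0..ord g - 1}"
    using ord_eq_order[OF assms] by auto
  then have "inj_on (\<lambda>k. g [^] k) {..<p}"
    using ord_inj[OF assms(1)] by simp
  moreover have "(\<lambda>k. g [^] k) ` {..<p} \<subseteq> carrier G"
    using assms(1) by auto
  moreover have "card ((\<lambda>k. g [^] k) ` {..<p}) = card (carrier G)"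
    using calculation(1) card_carrier by (simp add: card_image)
  ultimately show ?thesis
    using finite_carrier unfolding bij_betw_def by (simp add: card_subset_eq)
qed

lemma exists_pow_eq:
  assumes "g \<in> carrier G" "g \<noteq> \<one>" "x \<in> carrier G"
  shows "\<exists>k<p. x = g [^] k"
proof -
  have "x \<in> (\<lambda>k. g [^] k) ` {..<p}"
    using bij_betw_pow[OF assms(1,2)] assms(3) by (simp add: bij_betw_def)
  then show ?thesis
    by auto
qed

sublocale comm_group
proof (rule group_comm_groupI)
  fix x y assume x: "x \<in> carrier G" and y: "y \<in> carrier G"
  show "x \<otimes> y = y \<otimes> x"
  proof (cases "x = \<one>")
    case False
    then obtain k :: nat where "y = x [^] k"
      using exists_pow_eq[OF x False y] by blast
    then show ?thesis
      using x by (metis nat_pow_Suc nat_pow_Suc2)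
  qed (use y in simp)
qed

lemma inj_on_pow:
  assumes "\<not> p dvd n"
  shows "inj_on (\<lambda>x. x [^] n) (carrier G)"
proof (rule inj_onI)
  fix x y assume x: "x \<in> carrier G" and y: "y \<in> carrier G" and eq: "x [^] n = y [^] n"
  have "(x \<otimes> inv y) [^] n = \<one>"
    using x y by (simp add: nat_pow_distrib nat_pow_inv eq)
  then have "x \<otimes> inv y = \<one>"
    using x y assms pow_eq_one_iff by blast
  then show "x = y"
    using x y by (simp add: inv_solve_right')
qed

lemma pow_in_iso:
  assumes "\<not> p dvd n"
  shows "(\<lambda>x. x [^] n) \<in> iso G G"
proof -
  have "(\<lambda>x. x [^] n) ` carrier G = carrier G"
    using finite_carrier inj_on_pow[OF assms] by (intro endo_inj_surj) auto
  then have "bij_betw (\<lambda>x. x [^] n) (carrier G) (carrier G)"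
    using inj_on_pow[OF assms] by (simp add: bij_betw_def)
  moreover have "(\<lambda>x. x [^] n) \<in> hom G G"
    by (intro homI) (simp_all add: nat_pow_distrib)
  ultimately show ?thesis
    by (simp add: iso_def)
qed

lemma exists_ne_one: "\<exists>g\<in>carrier G. g \<noteq> \<one>"
proof (rule ccontr)
  assume "\<not> ?thesis"
  then have "carrier G = {\<one>}"
    by auto
  then show False
    using card_carrier prime_p by auto
qed

definition exponents :: "'a \<Rightarrow> 'a set \<Rightarrow> nat set" where
  "exponents g X = {k. k < p \<and> g [^] k \<in> X}"

definition exponent_poly :: "'a \<Rightarrow> 'a set \<Rightarrow> int poly" where
  "exponent_poly g X = (\<Sum>k\<in>exponents g X. monom 1 k)"

lemma bij_betw_exponents:
  assumes "g \<in> carrier G" "g \<noteq> \<one>" "X \<subseteq> carrier G"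
  shows "bij_betw (\<lambda>k. g [^] k) (exponents g X) X"
proof (rule bij_betw_subset[OF bij_betw_pow[OF assms(1,2)]])
  show "(\<lambda>k. g [^] k) ` exponents g X = X"
  proof
    show "X \<subseteq> (\<lambda>k. g [^] k) ` exponents g X"
    proof
      fix x assume x: "x \<in> X"
      then obtain k :: nat where "k < p" "x = g [^] k"
        using exists_pow_eq[OF assms(1,2)] assms(3) by blast
      then show "x \<in> (\<lambda>k. g [^] k) ` exponents g X"
        using x unfolding exponents_def by blast
    qed
  qed (auto simp: exponents_def)
qed (auto simp: exponents_def)

lemma walk_count_eq_fiber_coeff:
  assumes g: "g \<in> carrier G" "g \<noteq> \<one>" and X: "X \<subseteq> carrier G" and "z \<in> carrier G"
  shows "int (walk_count (carrier G) (cay_arcs G X) n \<one> z) = fiber_coeff G g (exponent_poly g X ^ n) z"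
  using assms(4)
proof (induction n arbitrary: z)
  case 0
  then show ?case
    using fiber_coeff_monom_one[of G g 0 z] by simp
next
  case (Suc n z)
  let ?walks = "walk_count (carrier G) (cay_arcs G X)"
  let ?F = "exponent_poly g X"
  have "(w, z) \<in> cay_arcs G X \<longleftrightarrow> z \<otimes> inv w \<in> X" if "w \<in> carrier G" for w
    using mem_cay_arcs_iff[OF X that Suc.prems] .
  then have "bij_betw (\<lambda>x. z \<otimes> inv x) X {w \<in> carrier G. (w, z) \<in> cay_arcs G X}"
    using Suc.prems X mult_inv_mult_inv_cancel
    by (intro bij_betwI[where g = "\<lambda>w. z \<otimes> inv w"]) (auto simp del: inv_mult)
  then have bij: "bij_betw (\<lambda>k. z \<otimes> inv (g [^] k)) (exponents g X) {w \<in> carrier G. (w, z) \<in> cay_arcs G X}"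
    using bij_betw_trans[OF bij_betw_exponents[OF g X]] by (simp add: comp_def)
  have "int (?walks (Suc n) \<one> z) = (\<Sum>w\<in>{w \<in> carrier G. (w, z) \<in> cay_arcs G X}. int (?walks n \<one> w))"
    by simp
  also have "\<dots> = (\<Sum>k\<in>exponents g X. int (?walks n \<one> (z \<otimes> inv (g [^] k))))"
    using bij by (rule sum.reindex_bij_betw[symmetric])
  also have "\<dots> = (\<Sum>k\<in>exponents g X. fiber_coeff G g (monom 1 k * ?F ^ n) z)"
    using Suc g by (simp add: fiber_coeff_monom_one_mult)
  also have "\<dots> = fiber_coeff G g (?F ^ Suc n) z"
    by (simp add: exponent_poly_def fiber_coeff_sum sum_distrib_right)
  finally show ?case .
qed

lemma walk_count_prime_cong:
  assumes X: "X \<subseteq> carrier G" and q: "prime q" and z: "z \<in> carrier G"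
  shows "[walk_count (carrier G) (cay_arcs G X) q \<one> z = card {x \<in> X. x [^] q = z}] (mod q)"
proof -
  obtain g where g: "g \<in> carrier G" "g \<noteq> \<one>"
    using exists_ne_one by blast
  let ?F = "exponent_poly g X"
  obtain R where "?F ^ q - (\<Sum>k\<in>exponents g X. monom 1 k ^ q) = of_nat q * R"
    using freshmans_dream_sum_dvd[OF q, of "\<lambda>k. monom 1 k" "exponents g X"]
    unfolding exponent_poly_def by (elim dvdE)
  then have "?F ^ q = (\<Sum>k\<in>exponents g X. monom 1 (k * q)) + smult (int q) R"
    by (simp add: monom_power of_nat_poly algebra_simps)
  then have "fiber_coeff G g (?F ^ q) z =
      (\<Sum>k\<in>exponents g X. if (g [^] k) [^] q = z then 1 else 0) + int q * fiber_coeff G g R z"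
    using g by (simp add: fiber_coeff_add fiber_coeff_sum fiber_coeff_smult fiber_coeff_monom_one nat_pow_pow)
  also have "(\<Sum>k\<in>exponents g X. if (g [^] k) [^] q = z then 1 else 0) = (\<Sum>x\<in>X. if x [^] q = z then 1 else 0)"
    using bij_betw_exponents[OF g X] by (rule sum.reindex_bij_betw)
  also have "\<dots> = int (card {x \<in> X. x [^] q = z})"
    using finite_subset[OF X finite_carrier] by (simp add: sum.If_cases Int_def)
  finally have "int (walk_count (carrier G) (cay_arcs G X) q \<one> z) =
      int (card {x \<in> X. x [^] q = z}) + int q * fiber_coeff G g R z"
    using walk_count_eq_fiber_coeff[OF g X z] by simp
  then have "[int (card {x \<in> X. x [^] q = z}) = int (walk_count (carrier G) (cay_arcs G X) q \<one> z)] (mod int q)"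
    unfolding cong_iff_lin by blast
  then show ?thesis
    by (simp add: cong_int_iff cong_sym_eq)
qed

lemma card_pow_roots_le_one:
  assumes "\<not> p dvd q" "X \<subseteq> carrier G"
  shows "card {x \<in> X. x [^] q = z} \<le> 1"
  unfolding One_nat_def using inj_on_pow[OF assms(1)] assms(2) finite_subset[OF assms(2) finite_carrier]
  by (subst card_le_Suc0_iff_eq) (auto dest: inj_onD)

lemma mem_pow_image_iff_card_roots:
  assumes "\<not> p dvd q" "X \<subseteq> carrier G"
  shows "z \<in> (\<lambda>x. x [^] q) ` X \<longleftrightarrow> card {x \<in> X. x [^] q = z} = 1"
proof -
  have "finite {x \<in> X. x [^] q = z}"
    using finite_subset[OF assms(2) finite_carrier] by simp
  have "z \<in> (\<lambda>x. x [^] q) ` X \<longleftrightarrow> {x \<in> X. x [^] q = z} \<noteq> {}"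
    by blast
  also have "\<dots> \<longleftrightarrow> card {x \<in> X. x [^] q = z} \<noteq> 0"
    by (simp only: card_0_eq[OF \<open>finite {x \<in> X. x [^] q = z}\<close>])
  also have "\<dots> \<longleftrightarrow> card {x \<in> X. x [^] q = z} = 1"
    using card_pow_roots_le_one[OF assms, of z] by linarith
  finally show ?thesis .
qed

lemma cay_aut_card_pow_roots_cong:
  assumes X: "X \<subseteq> carrier G" and q: "prime q"
    and \<sigma>: "\<sigma> \<in> cay_aut G X" and a: "a \<in> carrier G" and b: "b \<in> carrier G"
  shows "[card {x \<in> X. x [^] q = b \<otimes> inv a} = card {x \<in> X. x [^] q = \<sigma> b \<otimes> inv (\<sigma> a)}] (mod q)"
proof -
  let ?walks = "walk_count (carrier G) (cay_arcs G X) q"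
  have \<sigma>a: "\<sigma> a \<in> carrier G" and \<sigma>b: "\<sigma> b \<in> carrier G"
    using cay_aut_closed[OF \<sigma>] a b by auto
  have "[card {x \<in> X. x [^] q = b \<otimes> inv a} = ?walks \<one> (b \<otimes> inv a)] (mod q)"
    using walk_count_prime_cong[OF X q] a b by (simp add: cong_sym_eq)
  also have "?walks \<one> (b \<otimes> inv a) = ?walks a b"
    using walk_count_eq_walk_count_from_one[OF X a b] by simp
  also have "\<dots> = ?walks (\<sigma> a) (\<sigma> b)"
    using cay_aut_preserves_walk_count[OF \<sigma> a b] by simp
  also have "\<dots> = ?walks \<one> (\<sigma> b \<otimes> inv (\<sigma> a))"
    using walk_count_eq_walk_count_from_one[OF X \<sigma>a \<sigma>b] .
  also have "[\<dots> = card {x \<in> X. x [^] q = \<sigma> b \<otimes> inv (\<sigma> a)}] (mod q)"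
    using walk_count_prime_cong[OF X q] \<sigma>a \<sigma>b by simp
  finally show ?thesis .
qed

lemma cay_aut_subset_cay_aut_pow_prime:
  assumes X: "X \<subseteq> carrier G" and q: "prime (q :: nat)"
  shows "cay_aut G X \<subseteq> cay_aut G ((\<lambda>x. x [^] q) ` X)"
proof (cases "p dvd q")
  case True
  have "x [^] q = \<one>" if "x \<in> X" for x
  proof -
    have "ord x dvd q"
      using ord_dvd_group_order[of x] that X card_carrier True
      by (auto simp: Coset.order_def intro: dvd_trans)
    then show ?thesis
      using that X by (auto simp: pow_eq_id)
  qed
  then show ?thesis
    by (intro cay_aut_subset_cay_aut_if_subset_one[OF X]) auto
next
  case False
  let ?Y = "(\<lambda>x. x [^] q) ` X"
  have "b \<otimes> inv a \<in> ?Y \<longleftrightarrow> \<sigma> b \<otimes> inv (\<sigma> a) \<in> ?Y"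
    if \<sigma>: "\<sigma> \<in> cay_aut G X" and "a \<in> carrier G" "b \<in> carrier G" for \<sigma> a b
  proof -
    have "card {x \<in> X. x [^] q = b \<otimes> inv a} = card {x \<in> X. x [^] q = \<sigma> b \<otimes> inv (\<sigma> a)}"
      using cay_aut_card_pow_roots_cong[OF X q that] card_pow_roots_le_one[OF False X]
        prime_gt_1_nat[OF q]
      by (elim cong_less_modulus_unique_nat) (auto intro: le_less_trans)
    then show ?thesis
      using mem_pow_image_iff_card_roots[OF False X] by simp
  qed
  moreover have "?Y \<subseteq> carrier G"
    using X by auto
  ultimately show ?thesis
    using X by (auto simp: mem_cay_aut_iff)
qed

lemma cay_aut_subset_cay_aut_pow:
  assumes X: "X \<subseteq> carrier G"
  shows "cay_aut G X \<subseteq> cay_aut G ((\<lambda>x. x [^] (m :: nat)) ` X)"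
proof (induction m rule: prime_divisors_induct)
  case zero
  show ?case
    using X by (intro cay_aut_subset_cay_aut_if_subset_one) auto
next
  case (unit m)
  then show ?case
    using X by (auto simp: image_cong[OF refl, of X _ id] subset_iff)
next
  case (factor q m)
  have image_mult: "(\<lambda>x. x [^] (q * m)) ` X = (\<lambda>y. y [^] q) ` (\<lambda>x. x [^] m) ` X"
    using X by (auto simp: image_image nat_pow_pow mult.commute intro!: image_cong)
  have "(\<lambda>x. x [^] m) ` X \<subseteq> carrier G"
    using X by auto
  then show ?case
    unfolding image_mult
    using subset_trans[OF factor.IH cay_aut_subset_cay_aut_pow_prime[OF _ factor.hyps(1)]] by blast
qed

lemma pow_image_subset_if_cay_aut:
  assumes S: "S \<subseteq> carrier G" and \<sigma>: "\<sigma> \<in> cay_aut G S" and \<sigma>_one: "\<sigma> \<one> = \<one>"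
    and y: "y \<in> carrier G" "y \<noteq> \<one>" and \<sigma>_y: "\<sigma> y = y [^] (k :: nat)"
  shows "(\<lambda>s. s [^] k) ` S \<subseteq> S"
proof
  fix u assume "u \<in> (\<lambda>s. s [^] k) ` S"
  then obtain s where s: "s \<in> S" "u = s [^] k"
    by blast
  show "u \<in> S"
  proof (cases "s = \<one>")
    case True
    then show ?thesis
      using s by simp
  next
    case False
    obtain j :: nat where j: "j < p" "y = s [^] j"
      using exists_pow_eq[OF _ False y(1)] s S by blast
    then have "\<not> p dvd j"
      using y(2) s S False pow_eq_one_iff by (metis subsetD)
    have "(\<lambda>x. x [^] j) ` S \<subseteq> carrier G"
      using S by auto
    moreover have "\<sigma> \<in> cay_aut G ((\<lambda>x. x [^] j) ` S)"
      using cay_aut_subset_cay_aut_pow[OF S] \<sigma> by blast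
    moreover have "y \<otimes> inv \<one> \<in> (\<lambda>x. x [^] j) ` S"
      using j s y by simp
    ultimately have "\<sigma> y \<otimes> inv (\<sigma> \<one>) \<in> (\<lambda>x. x [^] j) ` S"
      using y(1) by (simp add: cay_aut_quotient_iff)
    then obtain t where t: "t \<in> S" "y [^] k = t [^] j"
      using \<sigma>_y \<sigma>_one y by auto
    have "(s [^] k) [^] j = (s [^] j) [^] k"
      using s S by (auto simp: nat_pow_pow mult.commute)
    also have "\<dots> = t [^] j"
      using t j by simp
    finally have "(s [^] k) [^] j = t [^] j" .
    then have "s [^] k = t"
      using inj_on_pow[OF \<open>\<not> p dvd j\<close>] s t S by (auto dest: inj_onD)
    then show ?thesis
      using s t by simp
  qed
qed

lemma cay_aut_fixing_one_eq_id:
  assumes S: "S \<subseteq> carrier G" and stab: "aut_stab_trivial G S"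
    and \<sigma>: "\<sigma> \<in> cay_aut G S" and \<sigma>_one: "\<sigma> \<one> = \<one>" and y: "y \<in> carrier G"
  shows "\<sigma> y = y"
proof (cases "y = \<one>")
  case False
  have "\<sigma> y \<noteq> \<one>"
    using cay_aut_bij[OF \<sigma>] \<sigma>_one y False by (metis bij_betw_iff_bijections one_closed)
  obtain k :: nat where k: "k < p" "\<sigma> y = y [^] k"
    using exists_pow_eq[OF y False cay_aut_closed[OF \<sigma> y]] by blast
  with \<open>\<sigma> y \<noteq> \<one>\<close> have "k \<noteq> 0"
    by (metis nat_pow_0)
  with k(1) have "\<not> p dvd k"
    by (auto dest: dvd_imp_le)
  have "finite S"
    using S finite_carrier by (rule finite_subset)
  moreover have "inj_on (\<lambda>s. s [^] k) S"
    using inj_on_pow[OF \<open>\<not> p dvd k\<close>] S by (rule inj_on_subset)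
  ultimately have "(\<lambda>s. s [^] k) ` S = S"
    using pow_image_subset_if_cay_aut[OF S \<sigma> \<sigma>_one y False k(2)] by (intro endo_inj_surj)
  then have "x [^] k = x" if "x \<in> carrier G" for x
    using stab pow_in_iso[OF \<open>\<not> p dvd k\<close>] that unfolding aut_stab_trivial_def by blast
  then show ?thesis
    using k(2) y by simp
qed (use \<sigma>_one in simp)

lemma DRR_detecting: "DRR_detecting G"
  unfolding DRR_detecting_def
  using is_DRR_if_stabiliser_trivial cay_aut_fixing_one_eq_id by blast

end

lemma GRR_detecting_if_DRR_detecting: "DRR_detecting G \<Longrightarrow> GRR_detecting G"
  unfolding DRR_detecting_def GRR_detecting_def is_GRR_def by blast

theorem proposition4p2:
  fixes G :: "('a, 'b) monoid_scheme"
  assumes "group G"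
    and "prime (card (carrier G))"
  shows "DRR_detecting G \<and> GRR_detecting G"
proof -
  interpret prime_order_group G "card (carrier G)"
    using assms by (simp add: prime_order_group_def prime_order_group_axioms_def)
  show ?thesis
    using DRR_detecting GRR_detecting_if_DRR_detecting by blast
qed

end
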